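(* There is no binary relation $\succsim$ on $l_\infty$ that satisfies Weak order, Monotonicity, Continuity, ICRP, Convexity, ISU and IPIS and is represented by a constant equivalent $I:l_\infty\to\mathbb R$.
   Context: $l_\infty$: real bounded sequences indexed by $\mathbb N$; $\theta\in\mathbb R$ also a constant sequence; $x\ge y$ coordinatewise. A constant equivalent representing $\succsim$ is $I$ with $x\sim I(x)$ and $x\succsim y\iff I(x)\ge I(y)$. For a bijection $\sigma:\mathbb N\to\mathbb N$, $d_\sigma=(d_{\sigma(0)},d_{\sigma(1)},\dots)$. Weak order: complete, transitive. Monotonicity: $x\ge y\Rightarrow x\succsim y$, $1\succ0$. Continuity: for $x\succsim y\succsim z$ the sets $\{\alpha\in[0,1]:\alpha x+(1-\alpha)z\succsim y\}$, $\{\alpha:y\succsim\alpha x+(1-\alpha)z\}$ are closed. ICRP: $x\succsim y\Rightarrow x+\theta\succsim y+\theta$. Convexity: $x\succsim\theta,y\succsim\theta\Rightarrow\lambda x+(1-\lambda)y\succsim\theta$ for $\lambda\in[0,1]$. ISU: $x\succsim y$, $\alpha\ge0\Rightarrow\alpha x\succsim\alpha y$. IPIS: for every bijection $\sigma:\mathbb N\to\mathbb N$ and $x,d\in l_\infty$, $x+d\succsim x$ implies $x+d_\sigma\succsim x$. *)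

theory Defs
  imports Complex_Main
begin

definition linf :: "(nat \<Rightarrow> real) set" where
  "linf = {x. \<exists>B. \<forall>n. \<bar>x n\<bar> \<le> B}"

definition cst :: "real \<Rightarrow> nat \<Rightarrow> real" where
  "cst t = (\<lambda>_. t)"

definition weak_order :: "((nat \<Rightarrow> real) \<Rightarrow> (nat \<Rightarrow> real) \<Rightarrow> bool) \<Rightarrow> bool" where
  "weak_order R \<longleftrightarrow>
     (\<forall>x\<in>linf. \<forall>y\<in>linf. R x y \<or> R y x) \<and>
     (\<forall>x\<in>linf. \<forall>y\<in>linf. \<forall>z\<in>linf. R x y \<longrightarrow> R y z \<longrightarrow> R x z)"

definition monotonicity :: "((nat \<Rightarrow> real) \<Rightarrow> (nat \<Rightarrow> real) \<Rightarrow> bool) \<Rightarrow> bool" where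
  "monotonicity R \<longleftrightarrow>
     (\<forall>x\<in>linf. \<forall>y\<in>linf. (\<forall>n. x n \<ge> y n) \<longrightarrow> R x y) \<and>
     R (cst 1) (cst 0) \<and> \<not> R (cst 0) (cst 1)"

definition continuity :: "((nat \<Rightarrow> real) \<Rightarrow> (nat \<Rightarrow> real) \<Rightarrow> bool) \<Rightarrow> bool" where
  "continuity R \<longleftrightarrow>
     (\<forall>x\<in>linf. \<forall>y\<in>linf. \<forall>z\<in>linf. R x y \<longrightarrow> R y z \<longrightarrow>
        closed {a \<in> {0..1::real}. R (\<lambda>n. a * x n + (1 - a) * z n) y} \<and>
        closed {a \<in> {0..1::real}. R y (\<lambda>n. a * x n + (1 - a) * z n)})"

definition ICRP :: "((nat \<Rightarrow> real) \<Rightarrow> (nat \<Rightarrow> real) \<Rightarrow> bool) \<Rightarrow> bool" where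
  "ICRP R \<longleftrightarrow>
     (\<forall>x\<in>linf. \<forall>y\<in>linf. \<forall>t::real. R x y \<longrightarrow> R (\<lambda>n. x n + t) (\<lambda>n. y n + t))"

definition convexity :: "((nat \<Rightarrow> real) \<Rightarrow> (nat \<Rightarrow> real) \<Rightarrow> bool) \<Rightarrow> bool" where
  "convexity R \<longleftrightarrow>
     (\<forall>x\<in>linf. \<forall>y\<in>linf. \<forall>t::real. \<forall>l\<in>{0..1::real}.
        R x (cst t) \<longrightarrow> R y (cst t) \<longrightarrow> R (\<lambda>n. l * x n + (1 - l) * y n) (cst t))"

definition ISU :: "((nat \<Rightarrow> real) \<Rightarrow> (nat \<Rightarrow> real) \<Rightarrow> bool) \<Rightarrow> bool" where
  "ISU R \<longleftrightarrow>
     (\<forall>x\<in>linf. \<forall>y\<in>linf. \<forall>a::real. R x y \<longrightarrow> a \<ge> 0 \<longrightarrow> R (\<lambda>n. a * x n) (\<lambda>n. a * y n))"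

definition IPIS :: "((nat \<Rightarrow> real) \<Rightarrow> (nat \<Rightarrow> real) \<Rightarrow> bool) \<Rightarrow> bool" where
  "IPIS R \<longleftrightarrow>
     (\<forall>\<sigma>::nat \<Rightarrow> nat. bij \<sigma> \<longrightarrow> (\<forall>x\<in>linf. \<forall>d\<in>linf.
        R (\<lambda>n. x n + d n) x \<longrightarrow> R (\<lambda>n. x n + d (\<sigma> n)) x))"

definition constant_equivalent ::
  "((nat \<Rightarrow> real) \<Rightarrow> (nat \<Rightarrow> real) \<Rightarrow> bool) \<Rightarrow> ((nat \<Rightarrow> real) \<Rightarrow> real) \<Rightarrow> bool" where
  "constant_equivalent R I \<longleftrightarrow>
     (\<forall>x\<in>linf. R x (cst (I x)) \<and> R (cst (I x)) x) \<and>
     (\<forall>x\<in>linf. \<forall>y\<in>linf. R x y \<longleftrightarrow> I x \<ge> I y)"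

end

theory Submission
  imports Defs "HOL-Library.Indicator_Function" "HOL-Library.Infinite_Set"
begin

text \<open>
  Translation and scale invariance force the constant equivalent to satisfy I (cst t) = t,
  I (x + t) = I x + t and I (a x) = a I x for a \<ge> 0; convexity makes I of a mixture at least
  the minimum of the two values, and IPIS makes I invariant under permutations of the indices.
  Hence I takes one value c on all indicators of infinite, co-infinite sets of indices.
  Writing the constant 1/3 as a mixture of the indicators of the three residue classes
  mod 3 gives c \<le> 1/3. On the other hand, for such a set A the sequences x = - 1_(-A) and
  d = 1_(-A) - 1_A satisfy I (x + d) = I x = c - 1, and a permutation exchanging A with its
  complement turns x + d into 3 1_A - 2, so IPIS yields 3 c - 2 \<ge> c - 1, i.e. c \<ge> 1/2.
\<close>

lemma linf_boundedI: "(\<And>n. \<bar>x n\<bar> \<le> B) \<Longrightarrow> x \<in> linf"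
  unfolding linf_def by blast

lemma linf_add: "x \<in> linf \<Longrightarrow> y \<in> linf \<Longrightarrow> (\<lambda>n. x n + y n) \<in> linf"
proof -
  assume "x \<in> linf" "y \<in> linf"
  then obtain A B where "\<And>n. \<bar>x n\<bar> \<le> A" "\<And>n. \<bar>y n\<bar> \<le> B"
    unfolding linf_def by blast
  then have "\<bar>x n + y n\<bar> \<le> A + B" for n
    by (meson abs_triangle_ineq add_mono order_trans)
  then show ?thesis by (rule linf_boundedI)
qed

lemma linf_scale: "x \<in> linf \<Longrightarrow> (\<lambda>n. a * x n) \<in> linf"
proof -
  assume "x \<in> linf"
  then obtain A where "\<And>n. \<bar>x n\<bar> \<le> A" unfolding linf_def by blast
  then have "\<bar>a * x n\<bar> \<le> \<bar>a\<bar> * A" for n by (simp add: abs_mult mult_left_mono)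
  then show ?thesis by (rule linf_boundedI)
qed

lemma linf_diff: "x \<in> linf \<Longrightarrow> y \<in> linf \<Longrightarrow> (\<lambda>n. x n - y n) \<in> linf"
  using linf_add[of x "\<lambda>n. - 1 * y n"] linf_scale[of y "- 1"] by simp

lemma linf_const: "(\<lambda>n. t) \<in> linf"
  by (rule linf_boundedI[of _ "\<bar>t\<bar>"]) simp

lemma linf_cst: "cst t \<in> linf"
  unfolding cst_def by (rule linf_const)

lemma linf_add_const: "x \<in> linf \<Longrightarrow> (\<lambda>n. x n + t) \<in> linf"
  using linf_add linf_const by blast

lemma linf_comp: "x \<in> linf \<Longrightarrow> (\<lambda>n. x (f n)) \<in> linf"
  unfolding linf_def by blast

lemma linf_indicator: "indicator A \<in> linf"
  by (rule linf_boundedI[of _ 1]) (simp add: indicator_def)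

lemma bij_betw_infinite_nat:
  fixes A B :: "nat set"
  assumes "infinite A" "infinite B"
  obtains f where "bij_betw f A B"
proof
  show "bij_betw (enumerate B \<circ> inv_into UNIV (enumerate A)) A B"
    using bij_enumerate[OF assms(1)] bij_enumerate[OF assms(2)]
    by (blast intro: bij_betw_trans bij_betw_inv_into)
qed

lemma bij_preimage_infinite_coinfinite:
  fixes A B :: "nat set"
  assumes "infinite A" "infinite (- A)" "infinite B" "infinite (- B)"
  obtains \<sigma> where "bij \<sigma>" "\<And>n. \<sigma> n \<in> A \<longleftrightarrow> n \<in> B"
proof -
  obtain f where f: "bij_betw f B A" using assms bij_betw_infinite_nat by metis
  obtain g where g: "bij_betw g (- B) (- A)" using assms bij_betw_infinite_nat by metis
  define \<sigma> where "\<sigma> n = (if n \<in> B then f n else g n)" for n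
  have "bij_betw \<sigma> B A" using f by (rule bij_betw_cong[THEN iffD1, rotated]) (simp add: \<sigma>_def)
  moreover have "bij_betw \<sigma> (- B) (- A)"
    using g by (rule bij_betw_cong[THEN iffD1, rotated]) (simp add: \<sigma>_def)
  ultimately have "bij_betw \<sigma> (B \<union> - B) (A \<union> - A)" by (rule bij_betw_combine) blast
  then have "bij \<sigma>" by simp
  moreover have "\<sigma> n \<in> A \<longleftrightarrow> n \<in> B" for n
    using f g by (auto simp: \<sigma>_def bij_betw_def)
  ultimately show ?thesis by (rule that)
qed

lemma infinite_residue_class:
  fixes k r :: nat
  assumes "r < k"
  shows "infinite {n. n mod k = r}"
  unfolding infinite_nat_iff_unbounded_le
proof
  fix m
  have "(k * m + r) mod k = r" using assms by simp
  moreover have "m \<le> k * m + r" using assms by (cases k) auto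
  ultimately show "\<exists>n\<ge>m. n \<in> {n. n mod k = r}" by blast
qed

lemma infinite_not_residue_class:
  fixes k r :: nat
  assumes "1 < k" "r < k"
  shows "infinite (- {n. n mod k = r})"
proof -
  have "Suc r mod k \<noteq> r" using assms by (simp add: mod_Suc)
  then have "{n. n mod k = Suc r mod k} \<subseteq> - {n. n mod k = r}" by auto
  moreover have "infinite {n. n mod k = Suc r mod k}"
    using assms(1) by (intro infinite_residue_class) simp
  ultimately show ?thesis using infinite_super by blast
qed

locale normalized_constant_equivalent =
  fixes R :: "(nat \<Rightarrow> real) \<Rightarrow> (nat \<Rightarrow> real) \<Rightarrow> bool" and I :: "(nat \<Rightarrow> real) \<Rightarrow> real"
  assumes constant_equivalent: "constant_equivalent R I"
    and monotone: "monotonicity R" and translation_invariant: "ICRP R" and scale_invariant: "ISU R"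
begin

lemma R_iff: "x \<in> linf \<Longrightarrow> y \<in> linf \<Longrightarrow> R x y \<longleftrightarrow> I y \<le> I x"
  using constant_equivalent unfolding constant_equivalent_def by blast

lemma R_cst_I: "x \<in> linf \<Longrightarrow> R x (cst (I x))" "x \<in> linf \<Longrightarrow> R (cst (I x)) x"
  using constant_equivalent unfolding constant_equivalent_def by blast+

lemma R_add_const: "x \<in> linf \<Longrightarrow> y \<in> linf \<Longrightarrow> R x y \<Longrightarrow> R (\<lambda>n. x n + t) (\<lambda>n. y n + t)"
  using translation_invariant unfolding ICRP_def by blast

lemma R_scale: "x \<in> linf \<Longrightarrow> y \<in> linf \<Longrightarrow> R x y \<Longrightarrow> 0 \<le> a \<Longrightarrow> R (\<lambda>n. a * x n) (\<lambda>n. a * y n)"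
  using scale_invariant unfolding ISU_def by blast

lemma not_R_cst_less:
  assumes "s < t"
  shows "\<not> R (cst s) (cst t)"
proof
  assume "R (cst s) (cst t)"
  then have "R (\<lambda>n. cst s n + - s) (\<lambda>n. cst t n + - s)"
    using R_add_const linf_cst by blast
  then have "R (cst 0) (cst (t - s))" by (simp add: cst_def)
  then have "R (\<lambda>n. 1 / (t - s) * cst 0 n) (\<lambda>n. 1 / (t - s) * cst (t - s) n)"
    using R_scale[OF linf_cst linf_cst, of 0 "t - s" "1 / (t - s)"] assms by simp
  then have "R (cst 0) (cst 1)" using assms by (simp add: cst_def)
  then show False using monotone unfolding monotonicity_def by blast
qed

lemma I_cst [simp]: "I (cst t) = t"
proof -
  have "R (cst t) (cst (I (cst t)))" "R (cst (I (cst t))) (cst t)"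
    using R_cst_I linf_cst by blast+
  then have "\<not> t < I (cst t)" "\<not> I (cst t) < t" using not_R_cst_less by blast+
  then show ?thesis by linarith
qed

lemma I_eqI:
  assumes "x \<in> linf" "R x (cst t)" "R (cst t) x"
  shows "I x = t"
  using R_iff[OF assms(1) linf_cst] R_iff[OF linf_cst assms(1)] assms(2,3) by simp

lemma I_add_const:
  assumes "y \<in> linf"
  shows "I (\<lambda>n. y n + t) = I y + t"
proof (rule I_eqI)
  have "(\<lambda>n. cst (I y) n + t) = cst (I y + t)" by (simp add: cst_def)
  then show "R (\<lambda>n. y n + t) (cst (I y + t))" "R (cst (I y + t)) (\<lambda>n. y n + t)"
    using R_add_const[OF assms linf_cst R_cst_I(1)[OF assms], where t = t]
      R_add_const[OF linf_cst assms R_cst_I(2)[OF assms], where t = t] by simp_all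
qed (rule linf_add_const[OF assms])

lemma I_scale:
  assumes "y \<in> linf" "0 \<le> a"
  shows "I (\<lambda>n. a * y n) = a * I y"
proof (rule I_eqI)
  have "(\<lambda>n. a * cst (I y) n) = cst (a * I y)" by (simp add: cst_def)
  then show "R (\<lambda>n. a * y n) (cst (a * I y))" "R (cst (a * I y)) (\<lambda>n. a * y n)"
    using R_scale[OF assms(1) linf_cst R_cst_I(1)[OF assms(1)] assms(2)]
      R_scale[OF linf_cst assms(1) R_cst_I(2)[OF assms(1)] assms(2)] by simp_all
qed (rule linf_scale[OF assms(1)])

lemma I_mixture_ge:
  assumes "convexity R" "x \<in> linf" "y \<in> linf" "0 \<le> l" "l \<le> 1"
  shows "min (I x) (I y) \<le> I (\<lambda>n. l * x n + (1 - l) * y n)"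
proof -
  let ?t = "min (I x) (I y)"
  have "R x (cst ?t)" "R y (cst ?t)" using R_iff assms(2,3) linf_cst by simp_all
  then have "R (\<lambda>n. l * x n + (1 - l) * y n) (cst ?t)"
    using assms unfolding convexity_def by simp
  moreover have "(\<lambda>n. l * x n + (1 - l) * y n) \<in> linf"
    using assms(2,3) by (intro linf_add linf_scale)
  ultimately show ?thesis using R_iff linf_cst by simp
qed

lemma I_shift_perm_ge:
  assumes "IPIS R" "bij \<sigma>" "x \<in> linf" "d \<in> linf" "I x \<le> I (\<lambda>n. x n + d n)"
  shows "I x \<le> I (\<lambda>n. x n + d (\<sigma> n))"
proof -
  have "R (\<lambda>n. x n + d n) x" using assms(3-5) linf_add R_iff by simp
  then have "R (\<lambda>n. x n + d (\<sigma> n)) x" using assms(1-4) unfolding IPIS_def by blast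
  then show ?thesis using assms(3,4) linf_add linf_comp R_iff by simp
qed

lemma I_perm_ge:
  assumes "IPIS R" "bij \<sigma>" "y \<in> linf"
  shows "I y \<le> I (\<lambda>n. y (\<sigma> n))"
proof -
  define d where "d n = y n - I y" for n
  have "d \<in> linf" unfolding d_def using linf_add_const[OF assms(3), of "- I y"] by simp
  moreover have "(\<lambda>n. cst (I y) n + d n) = y" "(\<lambda>n. cst (I y) n + d (\<sigma> n)) = (\<lambda>n. y (\<sigma> n))"
    by (simp_all add: d_def cst_def)
  ultimately show ?thesis
    using I_shift_perm_ge[OF assms(1,2) linf_cst, of d "I y"] by simp
qed

lemma I_perm:
  assumes "IPIS R" "bij \<sigma>" "y \<in> linf"
  shows "I (\<lambda>n. y (\<sigma> n)) = I y"
proof (rule antisym)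
  have "I (\<lambda>n. y (\<sigma> n)) \<le> I (\<lambda>n. y (\<sigma> (inv \<sigma> n)))"
    using I_perm_ge[OF assms(1) bij_imp_bij_inv[OF assms(2)] linf_comp[OF assms(3)]] .
  then show "I (\<lambda>n. y (\<sigma> n)) \<le> I y"
    using surj_f_inv_f[OF bij_is_surj[OF assms(2)]] by simp
qed (rule I_perm_ge[OF assms])

lemma I_indicator_eq:
  assumes "IPIS R" "infinite A" "infinite (- A)" "infinite B" "infinite (- B)"
  shows "I (indicator A) = I (indicator B)"
proof -
  obtain \<sigma> where "bij \<sigma>" "\<And>n. \<sigma> n \<in> A \<longleftrightarrow> n \<in> B"
    using bij_preimage_infinite_coinfinite assms(2-5) by metis
  then have "(\<lambda>n. indicator A (\<sigma> n) :: real) = indicator B" by (simp add: indicator_def fun_eq_iff)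
  then show ?thesis using I_perm[OF assms(1) \<open>bij \<sigma>\<close> linf_indicator] by metis
qed

lemma I_indicator_ge_half:
  assumes "IPIS R" "infinite A" "infinite (- A)"
  shows "1 / 2 \<le> I (indicator A)"
proof -
  let ?c = "I (indicator A)"
  obtain \<sigma> where \<sigma>: "bij \<sigma>" "\<And>n. \<sigma> n \<in> A \<longleftrightarrow> n \<in> - A"
    using bij_preimage_infinite_coinfinite[of A "- A"] assms(2,3) by auto
  have c_compl: "I (indicator (- A)) = ?c"
    using I_indicator_eq[of "- A" A] assms by simp
  define x :: "nat \<Rightarrow> real" where "x n = - indicator (- A) n" for n
  define d :: "nat \<Rightarrow> real" where "d n = indicator (- A) n - indicator A n" for n
  have x_eq: "x = (\<lambda>n. indicator A n + - 1)" by (simp add: x_def indicator_def fun_eq_iff)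
  then have Ix: "I x = ?c - 1" using I_add_const[OF linf_indicator, of A "- 1"] by simp
  have "x \<in> linf" "d \<in> linf"
    unfolding x_eq d_def by (intro linf_add_const linf_diff linf_indicator)+
  have "(\<lambda>n. x n + d n) = (\<lambda>n. indicator (- A) n + - 1)"
    by (simp add: x_def d_def indicator_def fun_eq_iff)
  then have "I (\<lambda>n. x n + d n) = ?c - 1"
    using I_add_const[OF linf_indicator, of "- A" "- 1"] c_compl by simp
  then have "I x \<le> I (\<lambda>n. x n + d (\<sigma> n))"
    using I_shift_perm_ge[OF assms(1) \<sigma>(1) \<open>x \<in> linf\<close> \<open>d \<in> linf\<close>] Ix by simp
  moreover have "(\<lambda>n. x n + d (\<sigma> n)) = (\<lambda>n. 3 * indicator A n + - 2)"
    using \<sigma>(2) by (simp add: x_def d_def indicator_def fun_eq_iff)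
  moreover have "I (\<lambda>n. 3 * indicator A n + - 2) = 3 * ?c - 2"
    using I_add_const[OF linf_scale[OF linf_indicator], of 3 A "- 2"]
      I_scale[OF linf_indicator, of 3 A] by simp
  ultimately show ?thesis using Ix by simp
qed

lemma I_indicator_le_third:
  assumes "convexity R" "IPIS R" "infinite A" "infinite (- A)"
  shows "I (indicator A) \<le> 1 / 3"
proof -
  define a :: "nat \<Rightarrow> nat \<Rightarrow> real" where "a r = indicator {n. n mod 3 = r}" for r
  have a: "a r \<in> linf" for r unfolding a_def by (rule linf_indicator)
  have Ia: "I (a r) = I (indicator A)" if "r < 3" for r
    unfolding a_def using that assms(2-4)
    by (intro I_indicator_eq infinite_residue_class infinite_not_residue_class) simp_all
  define w where "w n = 1 / 2 * a 0 n + (1 - 1 / 2) * a 1 n" for n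
  have w: "w \<in> linf" unfolding w_def using a by (intro linf_add linf_scale)
  have "I (indicator A) \<le> I w"
    using I_mixture_ge[OF assms(1) a[of 0] a[of 1], of "1 / 2"] Ia[of 0] Ia[of 1]
    unfolding w_def by simp
  then have "I (indicator A) \<le> I (\<lambda>n. 1 / 3 * a 2 n + (1 - 1 / 3) * w n)"
    using I_mixture_ge[OF assms(1) a[of 2] w, of "1 / 3"] Ia[of 2] by simp
  moreover have "(\<lambda>n. 1 / 3 * a 2 n + (1 - 1 / 3) * w n) = cst (1 / 3)"
  proof
    fix n :: nat
    have "n mod 3 = 0 \<or> n mod 3 = 1 \<or> n mod 3 = 2" by linarith
    then show "1 / 3 * a 2 n + (1 - 1 / 3) * w n = cst (1 / 3) n"
      by (auto simp: a_def w_def cst_def)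
  qed
  ultimately show ?thesis by simp
qed

lemma convexity_IPIS_contradiction:
  assumes "convexity R" "IPIS R"
  shows False
proof -
  let ?E = "{n :: nat. n mod 2 = 0}"
  have "infinite ?E" "infinite (- ?E)"
    by (simp_all add: infinite_residue_class infinite_not_residue_class)
  then have "1 / 2 \<le> I (indicator ?E)" "I (indicator ?E) \<le> 1 / 3"
    using I_indicator_ge_half I_indicator_le_third assms by blast+
  then show False by simp
qed

end

theorem proposition8:
  shows "\<not> (\<exists>(R :: (nat \<Rightarrow> real) \<Rightarrow> (nat \<Rightarrow> real) \<Rightarrow> bool) (I :: (nat \<Rightarrow> real) \<Rightarrow> real).
            weak_order R \<and> monotonicity R \<and> continuity R \<and> ICRP R \<and> convexity R \<and>
            ISU R \<and> IPIS R \<and> constant_equivalent R I)"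
proof
  assume "\<exists>R I. weak_order R \<and> monotonicity R \<and> continuity R \<and> ICRP R \<and> convexity R \<and>
            ISU R \<and> IPIS R \<and> constant_equivalent R I"
  then obtain R I where "monotonicity R" "ICRP R" "convexity R" "ISU R" "IPIS R"
    and "constant_equivalent R I" by blast
  then interpret normalized_constant_equivalent R I by unfold_locales
  show False using \<open>convexity R\<close> \<open>IPIS R\<close> by (rule convexity_IPIS_contradiction)
qed

end
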